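(* Let $\psi\in\mathcal K^\star$ have radius of convergence $R_\psi>0$, apex $\tau$ and Khinchin family $(Y_t)$; for $t\in(0,R_\psi)$ let $q(t)$ be the extinction probability of the Galton–Watson process with offspring distribution $Y_t$. Then $q$ is differentiable on $(0,R_\psi)\setminus\{\tau\}$, and its derivative has a jump discontinuity at $t=\tau$: $$\lim_{t\downarrow\tau}\frac{q(t)-1}{t-\tau}=-\frac{2}{\tau},\qquad\lim_{t\uparrow\tau}\frac{q(t)-1}{t-\tau}=0.$$ Moreover, for all $t\in(0,R_\psi)\setminus\{\tau\}$, $$q'(t)=\frac{q(t)}{t}\left(\frac{1-m_\psi(t)}{1-m_\psi(tq(t))}-1\right).$$
   Context: $\mathcal K$ is the class of non-constant power series $f(z)=\sum_{n\ge0}a_nz^n$ with positive radius of convergence $R$, non-negative coefficients and $a_0>0$; its Khinchin family $(X_t)$ is given by $\mathbf P(X_t=n)=a_nt^n/f(t)$ for $n\ge0$, $t\in(0,R)$, with mean $m_f(t)=tf'(t)/f(t)$ (increasing in $t$). $\mathcal K^\star$ is the subclass of $f\in\mathcal K$ with $\lim_{t\uparrow R}m_f(t)>1$; the apex is the unique $\tau\in(0,R)$ with $m_f(\tau)=1$. The extinction probability is the probability that the Galton–Watson tree is finite. *)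

theory Defs
  imports "HOL-Analysis.Analysis"
begin

definition pser :: "(nat \<Rightarrow> real) \<Rightarrow> real \<Rightarrow> real" where
  "pser a t = (\<Sum>n. a n * t ^ n)"

definition in_K :: "(nat \<Rightarrow> real) \<Rightarrow> bool" where
  "in_K a \<longleftrightarrow> (\<forall>n. a n \<ge> 0) \<and> a 0 > 0 \<and> (\<exists>n>0. a n \<noteq> 0) \<and> conv_radius a > 0"

definition mean_K :: "(nat \<Rightarrow> real) \<Rightarrow> real \<Rightarrow> real" where
  "mean_K a t = t * deriv (pser a) t / pser a t"

text \<open>Class K*: lim_{t \<up> R} m(t) > 1 (limit taken in the extended reals; R may be infinite).\<close>
definition in_K_star :: "(nat \<Rightarrow> real) \<Rightarrow> bool" where
  "in_K_star a \<longleftrightarrow> in_K a \<and>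
     (\<exists>L::ereal. ((\<lambda>x. ereal (mean_K a (real_of_ereal x))) \<longlongrightarrow> L) (at_left (conv_radius a)) \<and> L > 1)"

text \<open>Probability generating function of Y_t: E[s^{Y_t}] = f(ts)/f(t).\<close>
definition pgf_K :: "(nat \<Rightarrow> real) \<Rightarrow> real \<Rightarrow> real \<Rightarrow> real" where
  "pgf_K a t s = pser a (t * s) / pser a t"

text \<open>Extinction probability of the Galton--Watson process with offspring law Y_t:
  P(tree finite) = lim_n P(Z_n = 0) = lim_n g_t^{(n)}(0), with g_t the offspring pgf.\<close>
definition extinction_prob :: "(nat \<Rightarrow> real) \<Rightarrow> real \<Rightarrow> real" where
  "extinction_prob a t = lim (\<lambda>n. ((pgf_K a t) ^^ n) 0)"

end

(*
  Let h(x) = f(x)/x. For 0 < s <= 1, s is a fixed point of the offspring pgf f(ts)/f(t) iff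
  h(ts) = h(t). Since h(x) = a_0/x + sum a_(n+1) x^n is strictly convex and
  m(x) - 1 = x h'(x)/h(x), h decreases on (0, tau] and increases on [tau, R). Hence q(t) = 1
  for t <= tau, while for t > tau the point u(t) = t q(t) is the partner of t, the unique
  point of (0, tau) with h(u) = h(t); differentiating u = h^-1(h(t)) gives the formula for q'.
  Near the apex h(x) - h(tau) ~ h''(tau) (x - tau)^2 / 2, so h(u) = h(t) forces
  (u - tau)/(t - tau) -> -1, and (q(t) - 1)/(t - tau) = ((u - tau)/(t - tau) - 1)/t -> -2/tau.
*)

theory Submission
  imports Defs
begin

lemma ereal_le_less_trans: "x \<le> y \<Longrightarrow> ereal y < R \<Longrightarrow> ereal x < R"
  by (metis ereal_less_eq(3) order.strict_trans1)

lemma conv_radius_diffs_ge: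
  fixes c :: "nat \<Rightarrow> 'a :: {banach, real_normed_field}"
  shows "conv_radius c \<le> conv_radius (diffs c)"
proof -
  have "fps_nth (fps_deriv (Abs_fps c)) = diffs c"
    by (simp add: fun_eq_iff fps_deriv_def diffs_def)
  then show ?thesis
    using fps_conv_radius_deriv[of "Abs_fps c"] by (simp add: fps_conv_radius_def)
qed

lemma has_real_derivative_pser:
  assumes "ereal \<bar>x\<bar> < conv_radius c"
  shows "(pser c has_real_derivative pser (diffs c) x) (at x)"
  using has_field_derivative_powser[of x c UNIV] assms
  unfolding pser_def[abs_def] by simp

lemma pser_mono:
  assumes "\<And>n. c n \<ge> 0" "0 \<le> x" "x \<le> y" "ereal y < conv_radius c"
  shows "pser c x \<le> pser c y"
  unfolding pser_def
proof (rule suminf_le)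
  show "c n * x ^ n \<le> c n * y ^ n" for n
    using assms by (simp add: mult_left_mono power_mono)
  show "summable (\<lambda>n. c n * x ^ n)" "summable (\<lambda>n. c n * y ^ n)"
    using assms by (auto intro!: summable_in_conv_radius intro: ereal_le_less_trans)
qed

lemma pser_nonneg:
  assumes "\<And>n. c n \<ge> 0" "0 \<le> x" "ereal x < conv_radius c"
  shows "0 \<le> pser c x"
  using pser_mono[OF assms(1) order_refl assms(2,3)] assms(1)[of 0]
  by (simp add: pser_def)

lemma iterates_tendsto_least_fixpoint:
  fixes g :: "real \<Rightarrow> real"
  assumes into: "\<And>s. 0 \<le> s \<Longrightarrow> s \<le> 1 \<Longrightarrow> 0 \<le> g s \<and> g s \<le> 1"
    and mono: "\<And>s s'. 0 \<le> s \<Longrightarrow> s \<le> s' \<Longrightarrow> s' \<le> 1 \<Longrightarrow> g s \<le> g s'"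
    and cont: "continuous_on {0..1} g"
  obtains L where "(\<lambda>n. (g ^^ n) 0) \<longlonglongrightarrow> L" "g 0 \<le> L" "L \<le> 1" "g L = L"
    "\<And>p. 0 \<le> p \<Longrightarrow> p \<le> 1 \<Longrightarrow> g p = p \<Longrightarrow> L \<le> p"
proof -
  define X where "X n = (g ^^ n) 0" for n
  have X_Suc: "X (Suc n) = g (X n)" for n
    by (simp add: X_def)
  have X_range: "0 \<le> X n \<and> X n \<le> 1" for n
    by (induction n) (simp_all add: X_def into)
  have "X n \<le> X (Suc n)" for n
  proof (induction n)
    case 0
    then show ?case using X_range[of 1] by (simp add: X_def)
  next
    case (Suc n)
    then show ?case using mono X_range by (metis X_Suc)
  qed
  then obtain L where L: "X \<longlonglongrightarrow> L" "\<And>n. X n \<le> L"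
    using incseq_convergent[of X 1] X_range by (auto simp: incseq_Suc_iff)
  have "L \<in> {0..1}"
    using L(1) X_range by (auto intro: LIMSEQ_le_const LIMSEQ_le_const2)
  have "(\<lambda>n. g (X n)) \<longlonglongrightarrow> g L"
    using continuous_on_tendsto_compose[OF cont L(1) \<open>L \<in> {0..1}\<close>] X_range by simp
  moreover have "(\<lambda>n. g (X n)) \<longlonglongrightarrow> L"
    using LIMSEQ_Suc[OF L(1)] by (simp add: X_Suc)
  ultimately have "g L = L"
    by (rule LIMSEQ_unique)
  moreover have "L \<le> p" if p: "0 \<le> p" "p \<le> 1" "g p = p" for p
  proof -
    have "X n \<le> p" for n
    proof (induction n)
      case 0
      then show ?case using p by (simp add: X_def)
    next
      case (Suc n)
      then show ?case using p mono X_range by (metis X_Suc)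
    qed
    then show ?thesis
      using L(1) by (intro LIMSEQ_le_const2) auto
  qed
  moreover have "g 0 \<le> L"
    using L(2)[of 1] by (simp add: X_def)
  ultimately show ?thesis
    using that L(1) \<open>L \<in> {0..1}\<close> unfolding X_def by auto
qed

lemma critical_point_quotient_tendsto:
  fixes h h' :: "real \<Rightarrow> real"
  assumes "open S" "c \<in> S" "\<And>x. x \<in> S \<Longrightarrow> (h has_real_derivative h' x) (at x)"
    and "(h' has_real_derivative D) (at c)" "h' c = 0"
  shows "((\<lambda>x. (h x - h c) / (x - c)\<^sup>2) \<longlongrightarrow> D / 2) (at c)"
proof (rule lhopital[where f'=h' and g'="\<lambda>x. 2 * (x - c)"])
  have "isCont h c"
    using assms(2,3) DERIV_isCont by blast
  then show "((\<lambda>x. h x - h c) \<longlongrightarrow> 0) (at c)"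
    by (simp add: isCont_def LIM_zero)
  show "((\<lambda>x. (x - c)\<^sup>2) \<longlongrightarrow> 0) (at c)"
    by (rule tendsto_eq_intros refl | simp)+
  show "\<forall>\<^sub>F x in at c. (x - c)\<^sup>2 \<noteq> 0" "\<forall>\<^sub>F x in at c. 2 * (x - c) \<noteq> 0"
    by (simp_all add: eventually_at_filter)
  show "\<forall>\<^sub>F x in at c. ((\<lambda>x. h x - h c) has_real_derivative h' x) (at x)"
    using eventually_at_in_open'[OF assms(1,2)]
    by eventually_elim (auto intro!: derivative_eq_intros assms(3))
  show "\<forall>\<^sub>F x in at c. ((\<lambda>x. (x - c)\<^sup>2) has_real_derivative 2 * (x - c)) (at x)"
    by (auto intro!: always_eventually derivative_eq_intros)
  have "((\<lambda>x. (h' x - h' c) / (x - c) / 2) \<longlongrightarrow> D / 2) (at c)"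
    using assms(4) by (intro tendsto_divide tendsto_const) (auto simp: has_field_derivative_iff)
  then show "((\<lambda>x. h' x / (2 * (x - c))) \<longlongrightarrow> D / 2) (at c)"
    by (simp add: assms(5) mult.commute)
qed

lemma level_partner_ratio_tendsto:
  fixes h u :: "real \<Rightarrow> real"
  assumes quad: "((\<lambda>x. (h x - h c) / (x - c)\<^sup>2) \<longlongrightarrow> L) (at c)" "L \<noteq> 0"
    and u: "filterlim u (at c) (at_right c)"
    and level: "\<forall>\<^sub>F t in at_right c. u t < c \<and> h (u t) = h t"
  shows "((\<lambda>t. (u t - c) / (t - c)) \<longlongrightarrow> -1) (at_right c)"
proof -
  define k where "k x = (h x - h c) / (x - c)\<^sup>2" for x
  have k: "(k \<longlongrightarrow> L) (at_right c)"
    using quad(1) unfolding k_def[abs_def] by (rule tendsto_mono[OF at_le, rotated]) simp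
  have "((\<lambda>t. k (u t)) \<longlongrightarrow> L) (at_right c)"
    using filterlim_compose[OF quad(1) u] by (simp add: k_def)
  then have "((\<lambda>t. - sqrt (k t / k (u t))) \<longlongrightarrow> - sqrt (L / L)) (at_right c)"
    using k quad(2) by (intro tendsto_intros) auto
  moreover have "\<forall>\<^sub>F t in at_right c. - sqrt (k t / k (u t)) = (u t - c) / (t - c)"
    using level tendsto_imp_eventually_ne[OF k quad(2)] eventually_at_right_less[of c]
  proof eventually_elim
    case (elim t)
    then have "h t \<noteq> h c"
      by (auto simp: k_def)
    then have "k t / k (u t) = ((u t - c) / (t - c))\<^sup>2"
      using elim by (simp add: k_def power_divide)
    moreover have "(u t - c) / (t - c) < 0"
      using elim by (simp add: divide_neg_pos)
    ultimately show ?case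
      by (simp only: real_sqrt_abs abs_of_neg minus_minus)
  qed
  ultimately show ?thesis
    using quad(2) by (simp add: tendsto_cong)
qed

locale khinchin_family =
  fixes a :: "nat \<Rightarrow> real"
  assumes coeff_nonneg: "\<And>n. 0 \<le> a n"
    and coeff_0_pos: "0 < a 0"
    and conv_radius_pos: "0 < conv_radius a"
begin

definition tail :: "nat \<Rightarrow> real" where
  "tail n = a (Suc n)"

text \<open>For \<open>0 < x < R\<close>, \<open>slope x = f(x)/x\<close> (lemma \<open>pser_eq_mult_slope\<close>). Splitting off
  \<open>a 0 / x\<close> leaves a power series with non-negative coefficients, so that \<open>slope'' > 0\<close>.\<close>

definition slope :: "real \<Rightarrow> real" where
  "slope x = a 0 / x + pser tail x"

definition slope' :: "real \<Rightarrow> real" where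
  "slope' x = pser (diffs tail) x - a 0 / x\<^sup>2"

definition slope'' :: "real \<Rightarrow> real" where
  "slope'' x = pser (diffs (diffs tail)) x + 2 * a 0 / x ^ 3"

lemma conv_radius_tail: "conv_radius tail = conv_radius a"
  using conv_radius_shift[of a 1] by (simp add: tail_def[abs_def])

lemma pser_eq_mult_slope:
  assumes "0 < x" "ereal x < conv_radius a"
  shows "pser a x = x * slope x"
proof -
  have "summable (\<lambda>n. a n * x ^ n)"
    using assms by (intro summable_in_conv_radius) auto
  from powser_split_head(1)[OF this] show ?thesis
    using assms by (simp add: pser_def slope_def tail_def field_simps)
qed

lemma pser_pos:
  assumes "0 \<le> x" "ereal x < conv_radius a"
  shows "0 < pser a x"
proof -
  have "pser a 0 = a 0"
    by (simp add: pser_def)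
  then show ?thesis
    using pser_mono[OF coeff_nonneg _ assms] coeff_0_pos by simp
qed

lemma slope_pos:
  assumes "0 < x" "ereal x < conv_radius a"
  shows "0 < slope x"
  using pser_pos[of x] pser_eq_mult_slope[of x] assms by (simp add: zero_less_mult_iff)

lemma has_real_derivative_slope:
  assumes "0 < x" "ereal x < conv_radius a"
  shows "(slope has_real_derivative slope' x) (at x)"
  using has_real_derivative_pser[of x tail] assms conv_radius_tail unfolding slope_def[abs_def] slope'_def
  by (auto intro!: derivative_eq_intros simp: power2_eq_square field_simps)

lemma has_real_derivative_slope':
  assumes "0 < x" "ereal x < conv_radius a"
  shows "(slope' has_real_derivative slope'' x) (at x)"
proof -
  have "ereal x < conv_radius (diffs tail)"
    using assms conv_radius_diffs_ge[of tail] conv_radius_tail by simp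
  then show ?thesis
    using has_real_derivative_pser[of x "diffs tail"] assms unfolding slope'_def[abs_def] slope''_def
    by (auto intro!: derivative_eq_intros simp: power2_eq_square power3_eq_cube field_simps)
qed

lemma slope''_pos:
  assumes "0 < x" "ereal x < conv_radius a"
  shows "0 < slope'' x"
proof -
  have "ereal x < conv_radius (diffs (diffs tail))"
    using assms conv_radius_diffs_ge[of tail] conv_radius_diffs_ge[of "diffs tail"] conv_radius_tail
    by simp
  moreover have "0 \<le> diffs (diffs tail) n" for n
    using coeff_nonneg by (simp add: diffs_def tail_def)
  ultimately show ?thesis
    using pser_nonneg[of "diffs (diffs tail)" x] assms coeff_0_pos by (simp add: slope''_def add_nonneg_pos)
qed

lemma isCont_slope: "0 < x \<Longrightarrow> ereal x < conv_radius a \<Longrightarrow> isCont slope x"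
  using has_real_derivative_slope DERIV_isCont by blast

lemma one_minus_mean_K:
  assumes "0 < x" "ereal x < conv_radius a"
  shows "1 - mean_K a x = - x * slope' x / slope x"
proof -
  obtain K where K: "x < K" "ereal K < conv_radius a"
    using ereal_dense2[OF assms(2)] by auto
  have "(pser a has_real_derivative slope x + x * slope' x) (at x)"
  proof (rule has_field_derivative_transform_within_open)
    show "((\<lambda>y. y * slope y) has_real_derivative slope x + x * slope' x) (at x)"
      using has_real_derivative_slope[OF assms] by (auto intro!: derivative_eq_intros)
    show "y * slope y = pser a y" if "y \<in> {0<..<K}" for y
      using that K pser_eq_mult_slope[of y] ereal_le_less_trans[of y K] by simp
  qed (use assms K in auto)
  then show ?thesis
    using assms slope_pos[OF assms] pser_eq_mult_slope[OF assms]
    by (simp add: mean_K_def DERIV_imp_deriv field_simps)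
qed

lemma pgf_K_mono:
  assumes "0 < t" "ereal t < conv_radius a" "0 \<le> s" "s \<le> s'" "s' \<le> 1"
  shows "pgf_K a t s \<le> pgf_K a t s'"
proof -
  have "t * s \<le> t * s'" "t * s' \<le> t"
    using assms by (auto simp: mult_left_mono mult_left_le)
  then have "pser a (t * s) \<le> pser a (t * s')"
    using assms by (intro pser_mono coeff_nonneg) (auto intro: ereal_le_less_trans[of _ t])
  then show ?thesis
    using pser_pos[of t] assms by (simp add: pgf_K_def divide_right_mono)
qed

lemma pgf_K_fixpoint_iff:
  assumes t: "0 < t" "ereal t < conv_radius a" and s: "0 < s" "s \<le> 1"
  shows "pgf_K a t s = s \<longleftrightarrow> slope (t * s) = slope t"
proof -
  have "ereal (t * s) < conv_radius a"
    using ereal_le_less_trans[of "t * s" t] t s by (simp add: mult_left_le)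
  then have "pser a (t * s) = t * s * slope (t * s)"
    using t s by (intro pser_eq_mult_slope) auto
  then have "pgf_K a t s = s * slope (t * s) / slope t"
    using pser_eq_mult_slope[OF t] t by (simp add: pgf_K_def)
  then show ?thesis
    using slope_pos[OF t] s by (simp add: divide_eq_eq)
qed

lemma extinction_prob_least_fixpoint:
  assumes t: "0 < t" "ereal t < conv_radius a"
  shows "0 < extinction_prob a t" "extinction_prob a t \<le> 1"
    "pgf_K a t (extinction_prob a t) = extinction_prob a t"
    "\<And>p. 0 \<le> p \<Longrightarrow> p \<le> 1 \<Longrightarrow> pgf_K a t p = p \<Longrightarrow> extinction_prob a t \<le> p"
proof -
  have "0 < pgf_K a t 0" "pgf_K a t 1 = 1"
    using pser_pos[of 0] pser_pos[of t] t conv_radius_pos by (simp_all add: pgf_K_def zero_ereal_def)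
  then have into: "0 \<le> pgf_K a t s \<and> pgf_K a t s \<le> 1" if "0 \<le> s" "s \<le> 1" for s
    using pgf_K_mono[OF t, of 0 s] pgf_K_mono[OF t, of s 1] that by auto
  have "continuous_on {0..1} (\<lambda>s. pser a (t * s))"
  proof (intro continuous_at_imp_continuous_on ballI)
    fix s :: real assume "s \<in> {0..1}"
    then have "ereal \<bar>t * s\<bar> < conv_radius a"
      using ereal_le_less_trans[of "t * s" t] t by (simp add: mult_left_le)
    then have "isCont (pser a) (t * s)"
      using has_real_derivative_pser DERIV_isCont by blast
    then show "isCont (\<lambda>s. pser a (t * s)) s"
      by (rule isCont_o2[rotated]) simp
  qed
  then have "continuous_on {0..1} (pgf_K a t)"
    unfolding pgf_K_def[abs_def] by (intro continuous_intros) (use pser_pos[of t] t in auto)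
  then obtain L where L: "(\<lambda>n. (pgf_K a t ^^ n) 0) \<longlonglongrightarrow> L" "pgf_K a t 0 \<le> L" "L \<le> 1"
      "pgf_K a t L = L" "\<And>p. 0 \<le> p \<Longrightarrow> p \<le> 1 \<Longrightarrow> pgf_K a t p = p \<Longrightarrow> L \<le> p"
    using iterates_tendsto_least_fixpoint[of "pgf_K a t"] into pgf_K_mono[OF t] by blast
  have "extinction_prob a t = L"
    using L(1) unfolding extinction_prob_def by (rule limI)
  then show "0 < extinction_prob a t" "extinction_prob a t \<le> 1"
    "pgf_K a t (extinction_prob a t) = extinction_prob a t"
    "\<And>p. 0 \<le> p \<Longrightarrow> p \<le> 1 \<Longrightarrow> pgf_K a t p = p \<Longrightarrow> extinction_prob a t \<le> p"
    using L \<open>0 < pgf_K a t 0\<close> by auto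
qed

lemma continuous_on_slope:
  assumes "0 < x" "ereal y < conv_radius a"
  shows "continuous_on {x..y} slope"
  using assms ereal_le_less_trans[of _ y]
  by (intro continuous_at_imp_continuous_on ballI isCont_slope) auto

lemma slope'_strict_mono:
  assumes "0 < x" "x < y" "ereal y < conv_radius a"
  shows "slope' x < slope' y"
  using assms ereal_le_less_trans[of _ y]
  by (intro DERIV_pos_imp_increasing[OF \<open>x < y\<close>])
    (auto intro!: exI has_real_derivative_slope' slope''_pos)

end

locale khinchin_apex = khinchin_family +
  fixes \<tau> :: real
  assumes apex_pos: "0 < \<tau>"
    and apex_below_conv_radius: "ereal \<tau> < conv_radius a"
    and mean_K_apex: "mean_K a \<tau> = 1"
begin

lemma below_apex_in_conv_radius: "z \<le> \<tau> \<Longrightarrow> ereal z < conv_radius a"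
  using ereal_le_less_trans[OF _ apex_below_conv_radius] .

lemma slope'_apex: "slope' \<tau> = 0"
  using one_minus_mean_K[OF apex_pos apex_below_conv_radius] slope_pos[OF apex_pos apex_below_conv_radius]
    apex_pos mean_K_apex
  by simp

lemma slope'_neg: "0 < x \<Longrightarrow> x < \<tau> \<Longrightarrow> slope' x < 0"
  using slope'_strict_mono[of x \<tau>] apex_below_conv_radius slope'_apex by simp

lemma slope'_pos: "\<tau> < x \<Longrightarrow> ereal x < conv_radius a \<Longrightarrow> 0 < slope' x"
  using slope'_strict_mono[of \<tau> x] apex_pos slope'_apex by simp

lemma slope_decreasing:
  assumes "0 < x" "x < y" "y \<le> \<tau>"
  shows "slope y < slope x"
proof (rule DERIV_neg_imp_decreasing_open[OF \<open>x < y\<close>])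
  fix z assume "x < z" "z < y"
  moreover have "ereal z < conv_radius a"
    using \<open>z < y\<close> assms below_apex_in_conv_radius by simp
  ultimately show "\<exists>d. (slope has_real_derivative d) (at z) \<and> d < 0"
    using assms by (intro exI[of _ "slope' z"] conjI has_real_derivative_slope slope'_neg) auto
qed (use assms below_apex_in_conv_radius continuous_on_slope in auto)

lemma slope_increasing:
  assumes "\<tau> \<le> x" "x < y" "ereal y < conv_radius a"
  shows "slope x < slope y"
proof (rule DERIV_pos_imp_increasing_open[OF \<open>x < y\<close>])
  fix z assume "x < z" "z < y"
  moreover have "ereal z < conv_radius a"
    using \<open>z < y\<close> assms ereal_le_less_trans[of z y] by simp
  ultimately show "\<exists>d. (slope has_real_derivative d) (at z) \<and> 0 < d"
    using assms apex_pos by (intro exI[of _ "slope' z"] conjI has_real_derivative_slope slope'_pos) auto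
qed (use assms apex_pos continuous_on_slope in auto)

lemma slope_less_iff_below_apex:
  assumes "0 < x" "x \<le> \<tau>" "0 < y" "y \<le> \<tau>"
  shows "slope x < slope y \<longleftrightarrow> y < x"
  using slope_decreasing[of x y] slope_decreasing[of y x] assms
  by (cases x y rule: linorder_cases) auto

definition slope_inv :: "real \<Rightarrow> real" where
  "slope_inv = the_inv_into {0<..<\<tau>} slope"

lemma inj_on_slope: "inj_on slope {0<..<\<tau>}"
  by (rule linorder_inj_onI') (auto dest: slope_decreasing)

lemma slope_inv_slope: "0 < v \<Longrightarrow> v < \<tau> \<Longrightarrow> slope_inv (slope v) = v"
  unfolding slope_inv_def by (rule the_inv_into_f_f[OF inj_on_slope]) simp

lemma slope_slope_inv:
  assumes "slope \<tau> < y"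
  shows "0 < slope_inv y" "slope_inv y < \<tau>" "slope (slope_inv y) = y"
proof -
  define e where "e = min (\<tau> / 2) (a 0 / y)"
  have "0 < slope \<tau>"
    using slope_pos apex_pos apex_below_conv_radius by blast
  then have e: "0 < e" "e < \<tau>" "e \<le> a 0 / y"
    using assms apex_pos coeff_0_pos by (auto simp: e_def)
  have "0 \<le> pser tail e"
    using e below_apex_in_conv_radius[of e] conv_radius_tail coeff_nonneg by (intro pser_nonneg) (auto simp: tail_def)
  moreover have "y \<le> a 0 / e"
    using e \<open>0 < slope \<tau>\<close> assms coeff_0_pos by (simp add: field_simps)
  ultimately have "y \<le> slope e"
    by (simp add: slope_def)
  moreover have "\<forall>x. e \<le> x \<and> x \<le> \<tau> \<longrightarrow> isCont slope x"
    using e below_apex_in_conv_radius by (auto intro!: isCont_slope)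
  ultimately obtain v where v: "e \<le> v" "v \<le> \<tau>" "slope v = y"
    using IVT2[of slope \<tau> y e] assms e by auto
  with assms have "v \<in> {0<..<\<tau>}"
    using e by (auto simp: order.order_iff_strict)
  then have "y \<in> slope ` {0<..<\<tau>}"
    using v by blast
  then show "0 < slope_inv y" "slope_inv y < \<tau>" "slope (slope_inv y) = y"
    unfolding slope_inv_def
    using the_inv_into_into[OF inj_on_slope, of y "{0<..<\<tau>}"] f_the_inv_into_f[OF inj_on_slope]
    by auto
qed

lemma has_real_derivative_slope_inv:
  assumes "slope \<tau> < y"
  shows "(slope_inv has_real_derivative inverse (slope' (slope_inv y))) (at y)"
proof -
  define v where "v = slope_inv y"
  have v: "0 < v" "v < \<tau>" "slope v = y"
    using slope_slope_inv[OF assms] by (simp_all add: v_def)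
  have "isCont slope_inv (slope v)"
  proof (rule isCont_inverse_function2[of "v / 2" v "(v + \<tau>) / 2"])
    fix z assume "v / 2 \<le> z" "z \<le> (v + \<tau>) / 2"
    then have "0 < z" "z < \<tau>"
      using v by auto
    then show "slope_inv (slope z) = z" "isCont slope z"
      by (simp_all add: slope_inv_slope isCont_slope below_apex_in_conv_radius)
  qed (use v in auto)
  moreover have "(slope has_real_derivative slope' v) (at (slope_inv y))"
    using v has_real_derivative_slope[of v] below_apex_in_conv_radius by (simp add: v_def)
  ultimately show ?thesis
  proof (intro DERIV_inverse_function[where a="slope \<tau>" and b="y + 1"])
    show "slope' (slope_inv y) \<noteq> 0"
      using slope'_neg[OF v(1,2)] unfolding v_def by simp
  qed (use assms v slope_slope_inv(3) in \<open>auto simp: v_def\<close>)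
qed

lemma extinction_prob_below_apex:
  assumes t: "0 < t" "t \<le> \<tau>"
  shows "extinction_prob a t = 1"
proof (rule ccontr)
  define q where "q = extinction_prob a t"
  have t_R: "ereal t < conv_radius a"
    using below_apex_in_conv_radius t(2) .
  note q = extinction_prob_least_fixpoint[OF t(1) t_R, folded q_def]
  assume "extinction_prob a t \<noteq> 1"
  then have "0 < t * q" "t * q < t"
    using q t by (simp_all add: q_def)
  then have "slope t < slope (t * q)"
    using t by (intro slope_decreasing) auto
  moreover have "slope (t * q) = slope t"
    using q pgf_K_fixpoint_iff[OF t(1) t_R] by simp
  ultimately show False
    by simp
qed

lemma extinction_prob_above_apex:
  assumes t: "\<tau> < t" "ereal t < conv_radius a"
  shows "t * extinction_prob a t = slope_inv (slope t)"
proof -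
  define q where "q = extinction_prob a t"
  define v where "v = slope_inv (slope t)"
  have t0: "0 < t"
    using t apex_pos by simp
  note q = extinction_prob_least_fixpoint[OF t0 t(2), folded q_def]
  have "slope \<tau> < slope t"
    using slope_increasing[of \<tau> t] t by simp
  then have v: "0 < v" "v < \<tau>" "slope v = slope t"
    using slope_slope_inv by (simp_all add: v_def)
  txt \<open>\<open>v / t\<close> is a fixed point, so \<open>t * q \<le> v < \<tau>\<close>; as \<open>t * q\<close> lies on the level of \<open>t\<close> too,
    injectivity of \<open>slope\<close> on \<open>(0, \<tau>)\<close> forces \<open>t * q = v\<close>.\<close>
  then have "pgf_K a t (v / t) = v / t"
    using pgf_K_fixpoint_iff[OF t0 t(2), of "v / t"] t0 t by simp
  then have "q \<le> v / t"
    using q(4)[of "v / t"] v t t0 by simp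
  then have "t * q < \<tau>"
    using t0 v by (simp add: field_simps)
  moreover have "slope (t * q) = slope t"
    using q pgf_K_fixpoint_iff[OF t0 t(2)] by simp
  ultimately have "slope_inv (slope t) = t * q"
    using slope_inv_slope[of "t * q"] q t0 by simp
  then show ?thesis
    by (simp add: q_def)
qed

lemma eventually_above_apex: "\<forall>\<^sub>F t in at_right \<tau>. \<tau> < t \<and> ereal t < conv_radius a"
proof -
  obtain \<rho> where \<rho>: "\<tau> < \<rho>" "ereal \<rho> < conv_radius a"
    using ereal_dense2[OF apex_below_conv_radius] by auto
  from eventually_at_right_real[OF \<rho>(1)] show ?thesis
    by eventually_elim (use \<rho>(2) ereal_le_less_trans[of _ \<rho>] in auto)
qed

lemma partner_above_apex:
  assumes "\<tau> < t" "ereal t < conv_radius a"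
  shows "0 < t * extinction_prob a t" "t * extinction_prob a t < \<tau>"
    "slope (t * extinction_prob a t) = slope t"
  using extinction_prob_above_apex[OF assms] slope_slope_inv slope_increasing[of \<tau> t] assms
  by auto

lemma partner_tendsto_apex: "filterlim (\<lambda>t. t * extinction_prob a t) (at \<tau>) (at_right \<tau>)"
proof -
  let ?u = "\<lambda>t. t * extinction_prob a t"
  have "(?u \<longlongrightarrow> \<tau>) (at_right \<tau>)"
  proof (rule order_tendstoI)
    fix y assume "y < \<tau>"
    define e where "e = max y (\<tau> / 2)"
    have e: "0 < e" "e < \<tau>" "y \<le> e"
      using \<open>y < \<tau>\<close> apex_pos by (auto simp: e_def)
    have "(slope \<longlongrightarrow> slope \<tau>) (at_right \<tau>)"
      using isCont_slope[OF apex_pos apex_below_conv_radius]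
      by (simp add: isCont_def filterlim_at_split)
    moreover have "slope \<tau> < slope e"
      using slope_decreasing[of e \<tau>] e by simp
    ultimately have "\<forall>\<^sub>F t in at_right \<tau>. slope t < slope e"
      by (rule order_tendstoD(2))
    with eventually_above_apex show "\<forall>\<^sub>F t in at_right \<tau>. y < ?u t"
    proof eventually_elim
      case (elim t)
      then have "slope (?u t) < slope e"
        using partner_above_apex by simp
      then have "e < ?u t"
        using slope_less_iff_below_apex[of "?u t" e] partner_above_apex[of t] elim e by simp
      then show ?case
        using e by simp
    qed
  next
    fix y assume "\<tau> < y"
    from eventually_above_apex show "\<forall>\<^sub>F t in at_right \<tau>. ?u t < y"
      by eventually_elim (use \<open>\<tau> < y\<close> partner_above_apex in force)
  qed
  moreover have "\<forall>\<^sub>F t in at_right \<tau>. ?u t \<noteq> \<tau>"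
    using eventually_above_apex by eventually_elim (use partner_above_apex in force)
  ultimately show ?thesis
    by (simp add: filterlim_at)
qed

lemma slope_quadratic_at_apex:
  "((\<lambda>x. (slope x - slope \<tau>) / (x - \<tau>)\<^sup>2) \<longlongrightarrow> slope'' \<tau> / 2) (at \<tau>)"
proof -
  obtain \<rho> where \<rho>: "\<tau> < \<rho>" "ereal \<rho> < conv_radius a"
    using ereal_dense2[OF apex_below_conv_radius] by auto
  show ?thesis
  proof (rule critical_point_quotient_tendsto[where S="{0<..<\<rho>}"])
    show "(slope has_real_derivative slope' x) (at x)" if "x \<in> {0<..<\<rho>}" for x
      using that \<rho>(2) ereal_le_less_trans[of x \<rho>] by (intro has_real_derivative_slope) auto
  qed (use \<rho> apex_pos apex_below_conv_radius has_real_derivative_slope' slope'_apex in auto)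
qed

lemma extinction_prob_tendsto_right:
  "((\<lambda>t. (extinction_prob a t - 1) / (t - \<tau>)) \<longlongrightarrow> - 2 / \<tau>) (at_right \<tau>)"
proof -
  let ?u = "\<lambda>t. t * extinction_prob a t"
  have "slope'' \<tau> / 2 \<noteq> 0"
    using slope''_pos[OF apex_pos apex_below_conv_radius] by simp
  moreover have "\<forall>\<^sub>F t in at_right \<tau>. ?u t < \<tau> \<and> slope (?u t) = slope t"
    using eventually_above_apex by eventually_elim (use partner_above_apex in force)
  ultimately have "((\<lambda>t. (?u t - \<tau>) / (t - \<tau>)) \<longlongrightarrow> -1) (at_right \<tau>)"
    using level_partner_ratio_tendsto slope_quadratic_at_apex partner_tendsto_apex by blast
  then have "((\<lambda>t. ((?u t - \<tau>) / (t - \<tau>) - 1) / t) \<longlongrightarrow> (-1 - 1) / \<tau>) (at_right \<tau>)"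
    using apex_pos by (intro tendsto_intros) auto
  moreover have "\<forall>\<^sub>F t in at_right \<tau>.
      ((?u t - \<tau>) / (t - \<tau>) - 1) / t = (extinction_prob a t - 1) / (t - \<tau>)"
    using eventually_above_apex by eventually_elim (use apex_pos in \<open>simp add: field_simps\<close>)
  ultimately show ?thesis
    by (simp add: tendsto_cong)
qed

lemma extinction_prob_tendsto_left:
  "((\<lambda>t. (extinction_prob a t - 1) / (t - \<tau>)) \<longlongrightarrow> 0) (at_left \<tau>)"
proof -
  have "\<forall>\<^sub>F t in at_left \<tau>. (extinction_prob a t - 1) / (t - \<tau>) = 0"
    using eventually_at_left_real[OF apex_pos] by eventually_elim (simp add: extinction_prob_below_apex)
  then show ?thesis
    by (rule tendsto_eventually)
qed

lemma has_real_derivative_extinction_prob_below_apex: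
  assumes "0 < t" "t < \<tau>"
  shows "(extinction_prob a has_real_derivative 0) (at t)"
proof (rule has_field_derivative_transform_within_open[where S="{0<..<\<tau>}"])
  show "((\<lambda>_. 1) has_real_derivative 0) (at t)"
    by simp
qed (use assms extinction_prob_below_apex in auto)

lemma has_real_derivative_extinction_prob_above_apex:
  assumes t: "\<tau> < t" "ereal t < conv_radius a"
  defines "u \<equiv> t * extinction_prob a t"
  shows "(extinction_prob a has_real_derivative (t * slope' t / slope' u - u) / t\<^sup>2) (at t)"
proof -
  have t0: "0 < t"
    using t apex_pos by simp
  have u: "slope_inv (slope t) = u"
    using extinction_prob_above_apex[OF t] by (simp add: u_def)
  have "slope \<tau> < slope t"
    using slope_increasing[of \<tau> t] t by simp
  then have "((\<lambda>s. slope_inv (slope s)) has_real_derivative slope' t / slope' u) (at t)"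
    using DERIV_chain2[OF has_real_derivative_slope_inv has_real_derivative_slope[OF t0 t(2)]] u
    by (simp add: divide_inverse_commute)
  from DERIV_divide[OF this DERIV_ident] have deriv:
    "((\<lambda>s. slope_inv (slope s) / s) has_real_derivative (t * slope' t / slope' u - u) / t\<^sup>2) (at t)"
    using t0 u by (simp add: mult.commute power2_eq_square)
  obtain \<rho> where \<rho>: "t < \<rho>" "ereal \<rho> < conv_radius a"
    using ereal_dense2[OF t(2)] by auto
  have eq: "slope_inv (slope s) / s = extinction_prob a s" if s: "s \<in> {\<tau><..<\<rho>}" for s
  proof -
    have "ereal s < conv_radius a"
      using s \<rho> ereal_le_less_trans[of s \<rho>] by simp
    then have "slope_inv (slope s) = s * extinction_prob a s"
      using s extinction_prob_above_apex by simp
    then show ?thesis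
      using s apex_pos by simp
  qed
  show ?thesis
    by (rule has_field_derivative_transform_within_open[where S="{\<tau><..<\<rho>}", OF deriv _ _ eq])
      (use t \<rho> in simp_all)
qed

lemma has_real_derivative_extinction_prob:
  assumes t: "0 < t" "ereal t < conv_radius a" "t \<noteq> \<tau>"
  shows "(extinction_prob a has_real_derivative
      (extinction_prob a t / t) *
      ((1 - mean_K a t) / (1 - mean_K a (t * extinction_prob a t)) - 1)) (at t)"
proof (cases "t < \<tau>")
  case True
  then have "1 - mean_K a t \<noteq> 0"
    using one_minus_mean_K[OF t(1,2)] slope'_neg[OF t(1)] slope_pos[OF t(1,2)] t by simp
  then show ?thesis
    using has_real_derivative_extinction_prob_below_apex[OF t(1) True]
      extinction_prob_below_apex[OF t(1)] True by simp
next
  case False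
  then have above: "\<tau> < t"
    using t(3) by simp
  define u where "u = t * extinction_prob a t"
  have u: "0 < u" "u < \<tau>" "slope u = slope t"
    using partner_above_apex[OF above t(2)] by (simp_all add: u_def)
  have "slope' u < 0" "0 < slope t"
    using slope'_neg u slope_pos t by auto
  have "1 - mean_K a u = - u * slope' u / slope t"
    using one_minus_mean_K[of u] u below_apex_in_conv_radius by simp
  then have "(1 - mean_K a t) / (1 - mean_K a u) = (t * slope' t / slope t) / (u * slope' u / slope t)"
    using one_minus_mean_K[OF t(1,2)] by (simp add: minus_divide_divide)
  also have "\<dots> = t * slope' t / (u * slope' u)"
    using \<open>0 < slope t\<close> by simp
  finally have "(extinction_prob a t / t) * ((1 - mean_K a t) / (1 - mean_K a u) - 1)
      = (u / t / t) * (t * slope' t / (u * slope' u) - 1)"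
    using t(1) by (simp add: u_def)
  also have "\<dots> = (t * slope' t / slope' u - u) / t\<^sup>2"
    using u(1) t(1) \<open>slope' u < 0\<close> by (simp add: field_simps power2_eq_square)
  finally show ?thesis
    using has_real_derivative_extinction_prob_above_apex[OF above t(2)] by (simp add: u_def)
qed

end

theorem theorem6p8:
  fixes a :: "nat \<Rightarrow> real" and \<tau> :: real
  assumes "in_K_star a"
    and "0 < \<tau>" and "ereal \<tau> < conv_radius a" and "mean_K a \<tau> = 1"
  shows "(\<forall>t. 0 < t \<and> ereal t < conv_radius a \<and> t \<noteq> \<tau> \<longrightarrow>
           (extinction_prob a has_real_derivative
              (extinction_prob a t / t) *
              ((1 - mean_K a t) / (1 - mean_K a (t * extinction_prob a t)) - 1)) (at t)) \<and>
         ((\<lambda>t. (extinction_prob a t - 1) / (t - \<tau>)) \<longlongrightarrow> - 2 / \<tau>) (at_right \<tau>) \<and>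
         ((\<lambda>t. (extinction_prob a t - 1) / (t - \<tau>)) \<longlongrightarrow> 0) (at_left \<tau>)"
proof -
  interpret khinchin_apex a \<tau>
    using assms by unfold_locales (auto simp: in_K_star_def in_K_def)
  show ?thesis
    using has_real_derivative_extinction_prob extinction_prob_tendsto_right
      extinction_prob_tendsto_left
    by blast
qed

end
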